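(* For every $N\ge2$, the probability measure $P^{1,N}$ on $\mathbb{R}^2$ with density $\varphi^{1,N}(x)=\pi^{-1}e^{-N|x|^2}\sum_{\ell=0}^{N-1}\frac{(N|x|^2)^\ell}{\ell!}$ is log-concave (i.e. $x\mapsto N|x|^2-\log\sum_{\ell=0}^{N-1}\frac{(N|x|^2)^\ell}{\ell!}$ is convex on $\mathbb{R}^2$), and its second moment equals $\int_{\mathbb{R}^2}|x|^2\,P^{1,N}(\mathrm{d}x)=\frac{N+1}{2N}$.
   Context: $P^{1,N}$ is the one-particle marginal of the complex Ginibre ensemble (the Coulomb gas $P^N$ with $\beta_N=N^2$). *)

theory Defs
  imports "HOL-Analysis.Analysis" "HOL-Probability.Probability"
begin

definition ginibre_density :: "nat \<Rightarrow> real^2 \<Rightarrow> real" where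
  "ginibre_density N x =
     (1 / pi) * exp (- real N * norm x ^ 2) *
     (\<Sum>l<N. (real N * norm x ^ 2) ^ l / fact l)"

definition ginibre_marginal :: "nat \<Rightarrow> (real^2) measure" where
  "ginibre_marginal N = density lborel (\<lambda>x. ennreal (ginibre_density N x))"

definition ginibre_potential :: "nat \<Rightarrow> real^2 \<Rightarrow> real" where
  "ginibre_potential N x =
     real N * norm x ^ 2 - ln (\<Sum>l<N. (real N * norm x ^ 2) ^ l / fact l)"

end

theory Submission
  imports Defs
begin

text \<open>Write t = N |x|^2 and let e_N(t) be the N-th partial sum of the exponential series, so
that the potential is phi(t) = t - ln e_N(t). Since e_N' = e_(N-1), we get
phi'(t) = t^(N-1) / ((N-1)! e_N(t)), which is nonnegative and nondecreasing for t \<ge> 0 because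
e_N(t) / t^(N-1) is a sum of nonincreasing powers of t. Hence phi is convex and nondecreasing on
[0,\<infinity>), and its composition with the convex map x \<mapsto> N |x|^2 is convex.

Under Lebesgue measure on the plane, |x|^2 is distributed as pi times Lebesgue measure on
[0,\<infinity>). In this variable the density becomes the uniform mixture of the Erlang densities with
shape l + 1 and rate N, l < N; so the total mass is 1 and the second moment is the average of
their means (l + 1) / N, i.e. (N + 1) / (2 N).\<close>

definition exp_partial_sum :: "nat \<Rightarrow> real \<Rightarrow> real" where
  "exp_partial_sum n t = (\<Sum>l<n. t ^ l / fact l)"

lemma exp_partial_sum_Suc:
  "exp_partial_sum (Suc n) t = exp_partial_sum n t + t ^ n / fact n"
  by (simp add: exp_partial_sum_def)

lemma exp_partial_sum_pos:
  assumes "0 < n" "0 \<le> t"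
  shows "0 < exp_partial_sum n t"
proof -
  have "(1::real) = t ^ 0 / fact 0" by simp
  also have "\<dots> \<le> exp_partial_sum n t"
    unfolding exp_partial_sum_def using assms by (intro member_le_sum) auto
  finally show ?thesis by simp
qed

lemma has_real_derivative_exp_partial_sum:
  "(exp_partial_sum (Suc n) has_real_derivative exp_partial_sum n t) (at t)"
proof (induction n)
  case 0
  then show ?case by (simp add: exp_partial_sum_def)
next
  case (Suc n)
  have "((\<lambda>t. t ^ Suc n / fact (Suc n)) has_real_derivative t ^ n / fact n) (at t)"
    using DERIV_cdivide[OF DERIV_pow[of "Suc n" t], of "fact (Suc n)"] by simp
  from DERIV_add[OF Suc.IH this] show ?case
    by (simp add: exp_partial_sum_Suc[abs_def] exp_partial_sum_Suc[of n t])
qed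

lemma power_div_exp_partial_sum_mono:
  assumes "0 \<le> a" "a \<le> b"
  shows "a ^ n / exp_partial_sum (Suc n) a \<le> b ^ n / exp_partial_sum (Suc n) b"
proof -
  have "a ^ n * (b ^ l / fact l) \<le> b ^ n * (a ^ l / fact l)" if "l \<le> n" for l
  proof -
    have "a ^ n * b ^ l = a ^ l * (a ^ (n - l) * b ^ l)"
      using that by (simp add: power_add[symmetric])
    also have "\<dots> \<le> a ^ l * (b ^ (n - l) * b ^ l)"
      using assms by (intro mult_left_mono mult_right_mono power_mono) auto
    also have "\<dots> = b ^ n * a ^ l"
      using that by (simp add: power_add[symmetric])
    finally show ?thesis by (simp add: divide_right_mono mult.assoc[symmetric])
  qed
  then have "a ^ n * exp_partial_sum (Suc n) b \<le> b ^ n * exp_partial_sum (Suc n) a"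
    unfolding exp_partial_sum_def sum_distrib_left by (intro sum_mono) auto
  then show ?thesis
    using assms exp_partial_sum_pos[of "Suc n"] by (simp add: divide_simps)
qed

lemma has_real_derivative_sub_ln_exp_partial_sum:
  assumes "0 \<le> t"
  shows "((\<lambda>t. t - ln (exp_partial_sum (Suc n) t)) has_real_derivative
           t ^ n / fact n / exp_partial_sum (Suc n) t) (at t)"
proof -
  have pos: "0 < exp_partial_sum (Suc n) t"
    using exp_partial_sum_pos assms by simp
  have "((\<lambda>t. t - ln (exp_partial_sum (Suc n) t)) has_real_derivative
          1 - exp_partial_sum n t / exp_partial_sum (Suc n) t) (at t)"
    using pos by (auto intro!: derivative_eq_intros has_real_derivative_exp_partial_sum)
  moreover have "1 - exp_partial_sum n t / exp_partial_sum (Suc n) t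
      = t ^ n / fact n / exp_partial_sum (Suc n) t"
    using pos by (simp add: field_simps exp_partial_sum_Suc)
  ultimately show ?thesis by simp
qed

lemma convex_on_sub_ln_exp_partial_sum:
  "convex_on {0..} (\<lambda>t. t - ln (exp_partial_sum (Suc n) t))"
proof (rule convex_on_realI)
  fix x y :: real
  assume "x \<in> {0..}" "y \<in> {0..}" "x \<le> y"
  then show "x ^ n / fact n / exp_partial_sum (Suc n) x \<le> y ^ n / fact n / exp_partial_sum (Suc n) y"
    using divide_right_mono[OF power_div_exp_partial_sum_mono[of x y n], of "fact n"]
    by (simp add: mult.commute)
next
  show "((\<lambda>t. t - ln (exp_partial_sum (Suc n) t)) has_real_derivative
          x ^ n / fact n / exp_partial_sum (Suc n) x) (at x)" if "x \<in> {0..}" for x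
    using that by (intro has_real_derivative_sub_ln_exp_partial_sum) simp
qed simp

lemma mono_on_sub_ln_exp_partial_sum:
  "mono_on {0..} (\<lambda>t. t - ln (exp_partial_sum (Suc n) t))"
proof (rule mono_onI)
  fix x y :: real
  assume "x \<in> {0..}" "y \<in> {0..}" "x \<le> y"
  then show "x - ln (exp_partial_sum (Suc n) x) \<le> y - ln (exp_partial_sum (Suc n) y)"
    by (intro deriv_nonneg_imp_mono[OF has_real_derivative_sub_ln_exp_partial_sum])
       (auto intro!: divide_nonneg_pos mult_pos_pos exp_partial_sum_pos)
qed

lemma convex_on_mono_compose:
  fixes f :: "real \<Rightarrow> real"
  assumes g: "convex_on S g" and f: "convex_on T f" "mono_on T f" and "g ` S \<subseteq> T"
  shows "convex_on S (\<lambda>x. f (g x))"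
proof (rule convex_onI)
  show "convex S" using g by (rule convex_on_imp_convex)
  fix t :: real and x y
  assume t: "0 < t" "t < 1" and xy: "x \<in> S" "y \<in> S"
  have "(1 - t) *\<^sub>R x + t *\<^sub>R y \<in> S"
    using \<open>convex S\<close> xy t by (simp add: convexD)
  moreover have "(1 - t) * g x + t * g y \<in> T"
    using convexD[OF convex_on_imp_convex[OF f(1)], of "g x" "g y" "1 - t" t] assms(4) xy t
    by auto
  ultimately have "f (g ((1 - t) *\<^sub>R x + t *\<^sub>R y)) \<le> f ((1 - t) * g x + t * g y)"
    using assms(4) convex_onD[OF g, of t x y] xy t by (intro mono_onD[OF f(2)]) auto
  also have "\<dots> \<le> (1 - t) * f (g x) + t * f (g y)"
    using convex_onD[OF f(1), of t "g x" "g y"] assms(4) xy t by auto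
  finally show "f (g ((1 - t) *\<^sub>R x + t *\<^sub>R y)) \<le> (1 - t) * f (g x) + t * f (g y)" .
qed

lemma convex_on_norm_power2: "convex_on UNIV (\<lambda>x::'a::real_normed_vector. norm x ^ 2)"
proof (rule convex_on_mono_compose[where g = norm and T = "{0..}"])
  show "convex_on UNIV (norm :: 'a \<Rightarrow> real)"
    using convex_on_dist[of UNIV 0] by (simp add: dist_norm)
  show "convex_on {0..} (power2 :: real \<Rightarrow> real)"
    by (rule convex_on_subset[OF convex_power2]) auto
  show "mono_on {0..} (power2 :: real \<Rightarrow> real)"
    by (auto intro!: mono_onI power_mono)
qed auto

lemma convex_on_ginibre_potential:
  assumes "0 < N"
  shows "convex_on UNIV (ginibre_potential N)"
proof -
  obtain n where N: "N = Suc n" using assms by (cases N) auto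
  have "convex_on UNIV (\<lambda>x. real N * norm x ^ 2)"
    by (intro convex_on_cmul convex_on_norm_power2) simp
  then have "convex_on UNIV (\<lambda>x. (\<lambda>t. t - ln (exp_partial_sum (Suc n) t)) (real N * norm x ^ 2))"
    by (rule convex_on_mono_compose[OF _ convex_on_sub_ln_exp_partial_sum mono_on_sub_ln_exp_partial_sum])
       auto
  then show ?thesis
    unfolding ginibre_potential_def[abs_def] exp_partial_sum_def N .
qed

lemma vimage_norm_power2_atMost:
  "(\<lambda>x::'a::real_normed_vector. norm x ^ 2) -` {..a} = (if a < 0 then {} else cball 0 (sqrt a))"
proof (cases "a < 0")
  case True
  then show ?thesis by (auto dest: order.trans[OF zero_le_power2])
next
  case False
  then have "norm x ^ 2 \<le> a \<longleftrightarrow> norm x \<le> sqrt a" for x :: 'a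
    using real_le_rsqrt real_sqrt_le_iff[of "norm x ^ 2" a] by auto
  then show ?thesis using False by auto
qed

lemma distr_lborel_norm_power2:
  assumes "DIM('a::euclidean_space) = 2"
  shows "distr (lborel :: 'a measure) borel (\<lambda>x. norm x ^ 2)
       = density lborel (\<lambda>s. ennreal pi * indicator {0..} s)"
    (is "?D = ?L")
proof (rule measure_eqI_generator_eq_countable[where \<Omega> = UNIV and E = "range atMost"
      and A = "range (\<lambda>n::nat. {..real n})"])
  have "emeasure ?D {..a} = ennreal (pi * max a 0)" for a
    using assms
    by (subst emeasure_distr)
       (auto simp: vimage_norm_power2_atMost emeasure_cball unit_ball_vol_2 max_def)
  moreover have "emeasure ?L {..a} = ennreal (pi * max a 0)" for a
  proof -
    have "emeasure ?L {..a} = (\<integral>\<^sup>+ s. ennreal pi * indicator {0..a} s \<partial>lborel)"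
      by (subst emeasure_density) (auto intro!: nn_integral_cong split: split_indicator)
    also have "\<dots> = ennreal (pi * max a 0)"
      by (subst nn_integral_cmult_indicator) (auto simp: ennreal_mult max_def emeasure_lborel_Icc_eq)
    finally show ?thesis .
  qed
  ultimately show "X \<in> range atMost \<Longrightarrow> emeasure ?D X = emeasure ?L X"
    and "X \<in> range (\<lambda>n::nat. {..real n}) \<Longrightarrow> emeasure ?D X \<noteq> \<infinity>" for X
    by auto
  show "\<Union> (range (\<lambda>n::nat. {..real n})) = UNIV"
    by (auto intro: real_arch_simple)
qed (auto simp: Int_stable_def borel_eq_atMost)

lemma nn_integral_radial_plane:
  assumes "DIM('a::euclidean_space) = 2" and [measurable]: "g \<in> borel_measurable borel"
  shows "(\<integral>\<^sup>+ x. g (norm x ^ 2) \<partial>(lborel :: 'a measure))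
       = (\<integral>\<^sup>+ s. ennreal pi * indicator {0..} s * g s \<partial>lborel)"
proof -
  have "(\<integral>\<^sup>+ x. g (norm x ^ 2) \<partial>(lborel :: 'a measure))
      = (\<integral>\<^sup>+ s. g s \<partial>distr (lborel :: 'a measure) borel (\<lambda>x. norm x ^ 2))"
    by (subst nn_integral_distr) auto
  also have "\<dots> = (\<integral>\<^sup>+ s. ennreal pi * indicator {0..} s * g s \<partial>lborel)"
    by (simp add: distr_lborel_norm_power2[OF assms(1)] nn_integral_density)
  finally show ?thesis .
qed

lemma ginibre_density_eq_erlang_mixture:
  assumes "0 < N"
  shows "ginibre_density N x = (\<Sum>l<N. erlang_density l (real N) (norm x ^ 2)) / (pi * real N)"
  using assms
  by (simp add: ginibre_density_def erlang_density_def sum_divide_distrib sum_distrib_left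
      power_mult_distrib field_simps)

lemma nn_integral_ginibre_moment:
  assumes "0 < N"
  shows "(\<integral>\<^sup>+ x. ennreal (ginibre_density N x * (norm x ^ 2) ^ i) \<partial>lborel)
       = ennreal (\<Sum>l<N. fact (l + i) / (fact l * real N ^ i) / real N)"
proof -
  define h where "h s = (\<Sum>l<N. erlang_density l (real N) s * s ^ i) / (pi * real N)" for s
  have integrand_nonneg: "0 \<le> erlang_density l (real N) s * s ^ i" for l s
    by (cases "s < 0") (auto simp: erlang_density_def)
  have "(\<integral>\<^sup>+ x. ennreal (ginibre_density N x * (norm x ^ 2) ^ i) \<partial>lborel)
      = (\<integral>\<^sup>+ x. ennreal (h (norm x ^ 2)) \<partial>(lborel :: (real^2) measure))"
    using assms by (simp add: ginibre_density_eq_erlang_mixture h_def sum_distrib_right)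
  also have "\<dots> = (\<integral>\<^sup>+ s. ennreal pi * indicator {0..} s * ennreal (h s) \<partial>lborel)"
    by (rule nn_integral_radial_plane) (auto simp: h_def)
  also have "\<dots> = (\<integral>\<^sup>+ s. ennreal (1 / real N) *
                     (\<Sum>l<N. ennreal (erlang_density l (real N) s * s ^ i)) \<partial>lborel)"
  proof (rule nn_integral_cong)
    fix s :: real
    show "ennreal pi * indicator {0..} s * ennreal (h s)
        = ennreal (1 / real N) * (\<Sum>l<N. ennreal (erlang_density l (real N) s * s ^ i))"
      using integrand_nonneg
      by (cases "s < 0")
         (auto simp: h_def erlang_density_def ennreal_mult[symmetric] sum_nonneg)
  qed
  also have "\<dots> = ennreal (1 / real N) *
      (\<Sum>l<N. \<integral>\<^sup>+ s. ennreal (erlang_density l (real N) s * s ^ i) \<partial>lborel)"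
    by (simp add: nn_integral_cmult nn_integral_sum)
  also have "\<dots> = ennreal (1 / real N) * (\<Sum>l<N. ennreal (fact (l + i) / (fact l * real N ^ i)))"
    using assms by (simp add: nn_integral_erlang_ith_moment)
  also have "\<dots> = ennreal (\<Sum>l<N. fact (l + i) / (fact l * real N ^ i) / real N)"
    by (simp add: ennreal_mult[symmetric] sum_nonneg sum_divide_distrib)
  finally show ?thesis .
qed

lemma ginibre_density_nonneg: "0 \<le> ginibre_density N x"
  unfolding ginibre_density_def by (intro mult_nonneg_nonneg sum_nonneg) auto

lemma borel_measurable_ginibre_density[measurable]: "ginibre_density N \<in> borel_measurable borel"
  unfolding ginibre_density_def by measurable

lemma prob_space_ginibre_marginal:
  assumes "0 < N"
  shows "prob_space (ginibre_marginal N)"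
proof (rule prob_spaceI)
  have "emeasure (ginibre_marginal N) UNIV
      = (\<integral>\<^sup>+ x. ennreal (ginibre_density N x * (norm x ^ 2) ^ 0) \<partial>lborel)"
    by (simp add: ginibre_marginal_def emeasure_density)
  also have "\<dots> = 1"
    using nn_integral_ginibre_moment[OF assms, of 0] assms by simp
  finally show "emeasure (ginibre_marginal N) (space (ginibre_marginal N)) = 1"
    by (simp add: ginibre_marginal_def)
qed

lemma nn_integral_norm_power2_ginibre_marginal:
  assumes "0 < N"
  shows "(\<integral>\<^sup>+ x. ennreal (norm x ^ 2) \<partial>ginibre_marginal N) = ennreal ((real N + 1) / (2 * real N))"
proof -
  have "(\<integral>\<^sup>+ x. ennreal (norm x ^ 2) \<partial>ginibre_marginal N)
      = (\<integral>\<^sup>+ x. ennreal (ginibre_density N x * (norm x ^ 2) ^ 1) \<partial>lborel)"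
    unfolding ginibre_marginal_def
    by (subst nn_integral_density)
       (auto intro!: nn_integral_cong simp: ennreal_mult'[symmetric] ginibre_density_nonneg)
  also have "\<dots> = ennreal ((\<Sum>l<N. real l + 1) / real N ^ 2)"
    using nn_integral_ginibre_moment[OF assms, of 1]
    by (simp add: sum_divide_distrib power2_eq_square add.commute)
  also have "(\<Sum>l<N. real l + 1) = real N * (real N + 1) / 2"
    by (induction N) (auto simp: field_simps)
  finally show ?thesis
    using assms by (simp add: power2_eq_square field_simps)
qed

theorem mainTheorem14:
  fixes N :: nat
  assumes "N \<ge> 2"
  shows "prob_space (ginibre_marginal N)
       \<and> convex_on UNIV (ginibre_potential N)
       \<and> integrable (ginibre_marginal N) (\<lambda>x. norm x ^ 2)
       \<and> (\<integral>x. norm x ^ 2 \<partial>ginibre_marginal N) = (real N + 1) / (2 * real N)"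
proof -
  have N: "0 < N" using assms by simp
  have [measurable_cong]: "sets (ginibre_marginal N) = sets borel"
    by (simp add: ginibre_marginal_def)
  note second_moment = nn_integral_norm_power2_ginibre_marginal[OF N]
  have "integrable (ginibre_marginal N) (\<lambda>x. norm x ^ 2)"
    by (rule integrableI_nn_integral_finite[OF _ _ second_moment]) auto
  moreover have "(\<integral>x. norm x ^ 2 \<partial>ginibre_marginal N) = (real N + 1) / (2 * real N)"
    by (subst integral_eq_nn_integral) (auto simp: second_moment)
  ultimately show ?thesis
    using prob_space_ginibre_marginal[OF N] convex_on_ginibre_potential[OF N] by simp
qed

end
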